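(* Let $\mathcal D$ be an ordered, oriented Descartes configuration. Then the curvature-center coordinate matrix $M_{\mathcal D}$ is an integer matrix if and only if three of its four rows are integer vectors; equivalently, iff $\mathcal D$ contains three circles each having integer signed curvature $b$ and curvature$\times$center $b(x+iy)\in\mathbb Z[i]$.
   Context: Circles are taken in $\hat{\mathbb C}=\mathbb R^2\cup\{\infty\}$; lines count as circles. A Descartes configuration is a set of four mutually tangent circles with disjoint interiors; an ordered, oriented one carries an ordering and a total orientation, with signed curvatures $b_i$ (reciprocal radius, negative if the circle's interior is unbounded, $0$ for lines, all reversed for negative orientation). The curvature-center coordinate matrix $M_{\mathcal D}$ is the $4\times3$ matrix with $i$-th row $(b_i,b_ix_i,b_iy_i)$, $(x_i,y_i)$ the center of the $i$-th circle; for a line the row is $(0,n_x,n_y)$, $n$ the unit normal pointing into its interior half-plane (for a line, "curvature$\times$center" means $n_x+in_y$). *)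

theory Defs
  imports "HOL-Analysis.Analysis"
begin

text \<open>Oriented circles in the extended plane, given with a chosen interior.
  HPlane n d: boundary line Re(cnj n * z) = d (n a unit normal), interior the open
  half-plane Re(cnj n * z) > d, so n points into the interior.\<close>

datatype ocircle = Disk complex real | CoDisk complex real | HPlane complex real

fun wf_circle :: "ocircle \<Rightarrow> bool" where
  "wf_circle (Disk c r) = (r > 0)"
| "wf_circle (CoDisk c r) = (r > 0)"
| "wf_circle (HPlane n d) = (cmod n = 1)"

fun is_line :: "ocircle \<Rightarrow> bool" where
  "is_line (HPlane n d) = True"
| "is_line _ = False"

fun bdry :: "ocircle \<Rightarrow> complex set" where
  "bdry (Disk c r) = sphere c r"
| "bdry (CoDisk c r) = sphere c r"
| "bdry (HPlane n d) = {z. Re (cnj n * z) = d}"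

fun intr :: "ocircle \<Rightarrow> complex set" where
  "intr (Disk c r) = ball c r"
| "intr (CoDisk c r) = - cball c r"
| "intr (HPlane n d) = {z. Re (cnj n * z) > d}"

text \<open>The circle as a subset of the Riemann sphere: None stands for \<infinity>,
  which lies on every line.\<close>
definition bdry_hat :: "ocircle \<Rightarrow> complex option set" where
  "bdry_hat C = Some ` bdry C \<union> (if is_line C then {None} else {})"

definition tangent :: "ocircle \<Rightarrow> ocircle \<Rightarrow> bool" where
  "tangent C D \<longleftrightarrow> (\<exists>!p. p \<in> bdry_hat C \<inter> bdry_hat D)"

definition descartes :: "(4 \<Rightarrow> ocircle) \<Rightarrow> bool" where
  "descartes C \<longleftrightarrow> (\<forall>i. wf_circle (C i)) \<and>
     (\<forall>i j. i \<noteq> j \<longrightarrow> tangent (C i) (C j) \<and> intr (C i) \<inter> intr (C j) = {})"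

fun curv :: "ocircle \<Rightarrow> real" where
  "curv (Disk c r) = 1 / r"
| "curv (CoDisk c r) = - 1 / r"
| "curv (HPlane n d) = 0"

fun curv_center :: "ocircle \<Rightarrow> complex" where
  "curv_center (Disk c r) = c / complex_of_real r"
| "curv_center (CoDisk c r) = - c / complex_of_real r"
| "curv_center (HPlane n d) = n"

text \<open>Ordered, oriented Descartes configuration: an ordered Descartes configuration
  together with a total orientation (True = positive). For the negative orientation
  all interiors are reversed and all signed curvatures (and curvature\<times>centers)
  change sign.\<close>
definition osign :: "bool \<Rightarrow> real" where
  "osign pos = (if pos then 1 else -1)"

definition ocurv :: "(4 \<Rightarrow> ocircle) \<Rightarrow> bool \<Rightarrow> 4 \<Rightarrow> real" where
  "ocurv C pos i = osign pos * curv (C i)"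

definition ocurv_center :: "(4 \<Rightarrow> ocircle) \<Rightarrow> bool \<Rightarrow> 4 \<Rightarrow> complex" where
  "ocurv_center C pos i = complex_of_real (osign pos) * curv_center (C i)"

definition cc_matrix :: "(4 \<Rightarrow> ocircle) \<Rightarrow> bool \<Rightarrow> real^3^4" where
  "cc_matrix C pos = (\<chi> i. vector [ocurv C pos i, Re (ocurv_center C pos i),
                                     Im (ocurv_center C pos i)])"

definition int_row :: "real^3 \<Rightarrow> bool" where
  "int_row v \<longleftrightarrow> (\<forall>k. v $ k \<in> \<int>)"

definition int_matrix :: "real^3^4 \<Rightarrow> bool" where
  "int_matrix M \<longleftrightarrow> (\<forall>i. int_row (M $ i))"

end

theory Submission
  imports Defs
begin

text \<open>
  In augmented curvature-center coordinates \<open>w = (b', b, b x, b y)\<close>, where \<open>b'\<close> is the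
  curvature of the circle inverted in the unit circle, the four circles of a Descartes
  configuration form a matrix \<open>W\<close> whose rows satisfy \<open>Q(w\<^sub>i, w\<^sub>i) = -1\<close> and
  \<open>Q(w\<^sub>i, w\<^sub>j) = 1\<close> for \<open>i \<noteq> j\<close>, for the Lorentz form
  \<open>Q(u, v) = (u\<^sub>1 v\<^sub>2 + u\<^sub>2 v\<^sub>1)/2 - u\<^sub>3 v\<^sub>3 - u\<^sub>4 v\<^sub>4\<close>; in particular \<open>det W = \<plusminus>8\<close>.
  If rows 1 to 3 have integral \<open>(b, b x, b y)\<close>, then their \<open>b'\<close> are rational. Fix a
  coordinate \<open>k\<close> and put \<open>d = w\<^sub>4\<^sub>k - w\<^sub>1\<^sub>k - w\<^sub>2\<^sub>k - w\<^sub>3\<^sub>k\<close>. Replacing the fourth row of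
  \<open>W\<close> by the \<open>Q\<close>-dual of the \<open>k\<close>-th coordinate functional gives a rational matrix \<open>A\<close>;
  comparing determinants of the Gram matrices of \<open>(W, A)\<close> and \<open>(A, A)\<close> gives
  \<open>16 d = - det W det A\<close>, so \<open>d\<close> is rational, and \<open>d\<^sup>2 = - det (Gram A)\<close>, an integer.
  Hence \<open>d\<close>, and with it \<open>w\<^sub>4\<^sub>k\<close>, is an integer.
\<close>

section \<open>Determinants and integrality\<close>

lemma det_4:
  "det (A::'a::comm_ring_1^4^4) =
     A$1$1 * (A$2$2 * A$3$3 * A$4$4 + A$2$3 * A$3$4 * A$4$2 + A$2$4 * A$3$2 * A$4$3
             - A$2$2 * A$3$4 * A$4$3 - A$2$3 * A$3$2 * A$4$4 - A$2$4 * A$3$3 * A$4$2)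
   - A$1$2 * (A$2$1 * A$3$3 * A$4$4 + A$2$3 * A$3$4 * A$4$1 + A$2$4 * A$3$1 * A$4$3
             - A$2$1 * A$3$4 * A$4$3 - A$2$3 * A$3$1 * A$4$4 - A$2$4 * A$3$3 * A$4$1)
   + A$1$3 * (A$2$1 * A$3$2 * A$4$4 + A$2$2 * A$3$4 * A$4$1 + A$2$4 * A$3$1 * A$4$2
             - A$2$1 * A$3$4 * A$4$2 - A$2$2 * A$3$1 * A$4$4 - A$2$4 * A$3$2 * A$4$1)
   - A$1$4 * (A$2$1 * A$3$2 * A$4$3 + A$2$2 * A$3$3 * A$4$1 + A$2$3 * A$3$1 * A$4$2
             - A$2$1 * A$3$3 * A$4$2 - A$2$2 * A$3$1 * A$4$3 - A$2$3 * A$3$2 * A$4$1)"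
proof -
  have f1234: "finite {2::4, 3, 4}" "1 \<notin> {2::4, 3, 4}"
    by auto
  have f234: "finite {3::4, 4}" "2 \<notin> {3::4, 4}"
    by auto
  have f34: "finite {4::4}" "3 \<notin> {4::4}"
    by auto
  have sign_three_swaps: "sign (Transposition.transpose a b \<circ> (Transposition.transpose c d \<circ>
      Transposition.transpose e f)) = -1" if "a \<noteq> b" "c \<noteq> d" "e \<noteq> f" for a b c d e f :: 4
    using that by (simp add: sign_compose permutation_compose permutation_swap_id sign_swap_id)
  show ?thesis
    unfolding det_def UNIV_4
    unfolding sum_over_permutations_insert[OF f1234]
    unfolding sum_over_permutations_insert[OF f234]
    unfolding sum_over_permutations_insert[OF f34]
    unfolding permutes_sing
    by (simp add: sign_swap_id permutation_swap_id sign_compose sign_id swap_id_eq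
        sign_three_swaps algebra_simps)
qed

lemma det_Ints: "(\<And>i j. A$i$j \<in> \<int>) \<Longrightarrow> det (A::real^'n^'n) \<in> \<int>"
  unfolding det_def by (intro Ints_sum Ints_mult Ints_prod) auto

lemma det_Rats: "(\<And>i j. A$i$j \<in> \<rat>) \<Longrightarrow> det (A::real^'n^'n) \<in> \<rat>"
  unfolding det_def by (intro Rats_sum Rats_mult Rats_prod) auto

lemma Ints_if_Rats_power2_Ints:
  fixes x :: real
  assumes "x \<in> \<rat>" "x\<^sup>2 \<in> \<int>"
  shows "x \<in> \<int>"
proof -
  obtain a b where ab: "b > 0" "coprime a b" "x = of_int a / of_int b"
    using Rats_cases'[OF assms(1)] by metis
  obtain m where m: "x\<^sup>2 = of_int m"
    using assms(2) Ints_cases by metis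
  have "of_int (a\<^sup>2) = (of_int (m * b\<^sup>2) :: real)"
    using m ab(1,3) by (simp add: field_simps power2_eq_square)
  then have "b dvd a\<^sup>2"
    by (simp only: of_int_eq_iff) simp
  moreover have "coprime b (a\<^sup>2)"
    using ab(2) by (simp add: coprime_commute)
  ultimately have "is_unit b"
    by (meson coprime_common_divisor dvd_refl)
  then show ?thesis
    using ab(1,3) by simp
qed

section \<open>The Lorentz form and Descartes Gram matrices\<close>

definition lorentz_ip :: "real^4 \<Rightarrow> real^4 \<Rightarrow> real" where
  "lorentz_ip u v = (u$1 * v$2 + u$2 * v$1) / 2 - u$3 * v$3 - u$4 * v$4"

definition lorentz_mat :: "real^4^4" where
  "lorentz_mat = (\<chi> i j. if {i, j} = {1, 2} then 1/2 else if i = j \<and> i \<noteq> 1 \<and> i \<noteq> 2 then -1 else 0)"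

lemma lorentz_ip_commute: "lorentz_ip u v = lorentz_ip v u"
  by (simp add: lorentz_ip_def algebra_simps)

lemma lorentz_ip_scaleR: "lorentz_ip (a *\<^sub>R u) (b *\<^sub>R v) = a * b * lorentz_ip u v"
  by (simp add: lorentz_ip_def algebra_simps)

lemma lorentz_mat_nth:
  "lorentz_mat$1$1 = 0" "lorentz_mat$1$2 = 1/2" "lorentz_mat$1$3 = 0" "lorentz_mat$1$4 = 0"
  "lorentz_mat$2$1 = 1/2" "lorentz_mat$2$2 = 0" "lorentz_mat$2$3 = 0" "lorentz_mat$2$4 = 0"
  "lorentz_mat$3$1 = 0" "lorentz_mat$3$2 = 0" "lorentz_mat$3$3 = -1" "lorentz_mat$3$4 = 0"
  "lorentz_mat$4$1 = 0" "lorentz_mat$4$2 = 0" "lorentz_mat$4$3 = 0" "lorentz_mat$4$4 = -1"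
  by (simp_all add: lorentz_mat_def insert_commute doubleton_eq_iff)

lemma matrix_mult_lorentz_mat_nth:
  "(A ** lorentz_mat ** transpose B) $ i $ j = lorentz_ip (A$i) (B$j)"
  unfolding matrix_matrix_mult_def transpose_def
  by (simp add: sum_4 lorentz_mat_nth lorentz_ip_def field_simps)

lemma det_lorentz_mat: "det lorentz_mat = -1/4"
  by (simp add: det_4 lorentz_mat_nth)

text \<open>The augmented Euclidean Descartes theorem: the Gram matrix of the augmented
  curvature-center coordinates of a Descartes configuration is \<open>J - 2 I\<close>.\<close>

definition descartes_gram :: "real^4^4 \<Rightarrow> bool" where
  "descartes_gram W \<longleftrightarrow> (\<forall>i j. lorentz_ip (W$i) (W$j) = (if i = j then -1 else 1))"

lemma descartes_gram_permute_rows: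
  assumes "descartes_gram W" "inj p"
  shows "descartes_gram (\<chi> i. W $ p i)"
  using assms by (simp add: descartes_gram_def inj_eq)

lemma descartes_gram_det:
  assumes "descartes_gram W"
  shows "det W = 8 \<or> det W = -8"
proof -
  have "det W * det lorentz_mat * det W = det (W ** lorentz_mat ** transpose W)"
    by (simp add: det_mul det_transpose)
  also have "W ** lorentz_mat ** transpose W = (\<chi> i j. if i = j then -1 else 1)"
    using assms by (simp add: vec_eq_iff matrix_mult_lorentz_mat_nth descartes_gram_def)
  also have "det (\<chi> i j. if i = j then -1 else 1 :: real^4^4) = -16"
    by (simp add: det_4)
  finally have "det W * det lorentz_mat * det W = -16" .
  then have "(det W - 8) * (det W + 8) = 0"
    by (simp add: det_lorentz_mat algebra_simps)
  then show ?thesis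
    by auto
qed

lemma descartes_gram_curv_nonzero:
  assumes "descartes_gram W"
  obtains j where "j \<noteq> 4" "W$j$2 \<noteq> 0"
proof (rule ccontr)
  assume "\<not> thesis"
  then have curv: "W$1$2 = 0" "W$2$2 = 0" "W$3$2 = 0"
    using that by fastforce+
  have "(W$1$3 + W$2$3 + W$3$3)\<^sup>2 + (W$1$4 + W$2$4 + W$3$4)\<^sup>2
        = (\<Sum>i\<in>{1,2,3}. \<Sum>j\<in>{1,2,3}. - lorentz_ip (W$i) (W$j))"
    using curv by (simp add: lorentz_ip_def power2_eq_square algebra_simps)
  also have "\<dots> = -3"
    using assms by (simp add: descartes_gram_def)
  finally show False
    by (smt (verit) zero_le_power2)
qed

lemma descartes_gram_co_curv_Rats:
  assumes gram: "descartes_gram W"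
    and rats: "\<And>j k. j \<noteq> 4 \<Longrightarrow> k \<noteq> 1 \<Longrightarrow> W$j$k \<in> \<rat>" and i: "i \<noteq> 4"
  shows "W$i$1 \<in> \<rat>"
proof (cases "W$i$2 = 0")
  case False
  have "lorentz_ip (W$i) (W$i) = -1"
    using gram by (simp add: descartes_gram_def)
  then have "W$i$1 = (W$i$3 * W$i$3 + W$i$4 * W$i$4 - 1) / W$i$2"
    using False by (simp add: lorentz_ip_def field_simps)
  then show ?thesis
    using rats[OF i] by simp
next
  case True
  obtain j where j: "j \<noteq> 4" "W$j$2 \<noteq> 0"
    using descartes_gram_curv_nonzero[OF gram] by blast
  have "lorentz_ip (W$i) (W$j) = 1"
    using gram True j by (auto simp: descartes_gram_def)
  then have "W$i$1 = 2 * (1 + W$i$3 * W$j$3 + W$i$4 * W$j$4) / W$j$2"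
    using True j(2) by (simp add: lorentz_ip_def field_simps)
  then show ?thesis
    using rats[OF i] rats[OF j(1)] by simp
qed

definition lorentz_dual :: "4 \<Rightarrow> real^4" where
  "lorentz_dual k = (\<chi> l. if k = 2 then (if l = 1 then 2 else 0) else if l = k then -1 else 0)"

lemma lorentz_ip_dual:
  assumes "k \<noteq> 1"
  shows "lorentz_ip u (lorentz_dual k) = u$k"
proof -
  have "k = 2 \<or> k = 3 \<or> k = 4"
    using assms exhaust_4 by blast
  then show ?thesis
    by (auto simp: lorentz_ip_def lorentz_dual_def)
qed

lemma det_descartes_gram_last_column:
  "det (\<chi> i j. if j = 4 then x i else if i = j then -1 else 1 :: real^4^4)
     = 4 * (x 4 - x 1 - x 2 - x 3)"
  by (simp add: det_4 algebra_simps)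

definition dual_last_row :: "real^4^4 \<Rightarrow> 4 \<Rightarrow> real^4^4" where
  "dual_last_row W k = (\<chi> i. if i = 4 then lorentz_dual k else W$i)"

lemma det_dual_last_row:
  assumes "descartes_gram W" "k \<noteq> 1"
  shows "16 * (W$4$k - W$1$k - W$2$k - W$3$k) = - det W * det (dual_last_row W k)"
proof -
  have "det W * det lorentz_mat * det (dual_last_row W k)
      = det (W ** lorentz_mat ** transpose (dual_last_row W k))"
    by (simp add: det_mul det_transpose)
  also have "W ** lorentz_mat ** transpose (dual_last_row W k)
      = (\<chi> i j. if j = 4 then W$i$k else if i = j then -1 else 1)"
    using assms by (simp add: vec_eq_iff matrix_mult_lorentz_mat_nth dual_last_row_def
        lorentz_ip_dual descartes_gram_def)
  also have "det \<dots> = 4 * (W$4$k - W$1$k - W$2$k - W$3$k)"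
    by (rule det_descartes_gram_last_column)
  finally show ?thesis
    by (simp add: det_lorentz_mat)
qed

lemma det_dual_last_row_Rats:
  assumes "descartes_gram W" "\<And>j k. j \<noteq> 4 \<Longrightarrow> k \<noteq> 1 \<Longrightarrow> W$j$k \<in> \<rat>"
  shows "det (dual_last_row W k) \<in> \<rat>"
proof (rule det_Rats)
  fix i j
  show "dual_last_row W k $ i $ j \<in> \<rat>"
    using assms descartes_gram_co_curv_Rats[OF assms, of i]
    by (cases "i = 4"; cases "j = 1") (auto simp: dual_last_row_def lorentz_dual_def)
qed

lemma det_gram_dual_last_row_Ints:
  assumes "descartes_gram W" "\<And>j. j \<noteq> 4 \<Longrightarrow> W$j$k \<in> \<int>" "k \<noteq> 1"
  shows "det (dual_last_row W k ** lorentz_mat ** transpose (dual_last_row W k)) \<in> \<int>"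
proof (rule det_Ints)
  have "lorentz_dual k $ k \<in> \<int>"
    by (simp add: lorentz_dual_def)
  then show "(dual_last_row W k ** lorentz_mat ** transpose (dual_last_row W k)) $ i $ j \<in> \<int>"
    for i j
    using assms
    by (auto simp: matrix_mult_lorentz_mat_nth dual_last_row_def descartes_gram_def
        lorentz_ip_dual lorentz_ip_commute[of "lorentz_dual k"])
qed

lemma descartes_gram_last_row_Ints:
  assumes gram: "descartes_gram W"
    and ints: "\<And>j k. j \<noteq> 4 \<Longrightarrow> k \<noteq> 1 \<Longrightarrow> W$j$k \<in> \<int>" and k: "k \<noteq> 1"
  shows "W$4$k \<in> \<int>"
proof -
  define d where "d = W$4$k - W$1$k - W$2$k - W$3$k"
  define A where "A = dual_last_row W k"
  have d: "d = - det W * det A / 16"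
    using det_dual_last_row[OF gram k] unfolding d_def A_def by simp
  have "det A \<in> \<rat>"
    unfolding A_def using gram ints Ints_subset_Rats by (blast intro: det_dual_last_row_Rats)
  moreover have "det W \<in> \<rat>"
    using descartes_gram_det[OF gram] by auto
  ultimately have "d \<in> \<rat>"
    using d by simp
  have "(det W)\<^sup>2 = 64"
    using descartes_gram_det[OF gram] by auto
  then have "d\<^sup>2 = - det (A ** lorentz_mat ** transpose A)"
    unfolding d det_mul det_transpose det_lorentz_mat by (simp add: field_simps power2_eq_square)
  moreover have "det (A ** lorentz_mat ** transpose A) \<in> \<int>"
    unfolding A_def by (rule det_gram_dual_last_row_Ints[OF gram ints[OF _ k] k])
  ultimately have "d \<in> \<int>"
    using \<open>d \<in> \<rat>\<close> Ints_if_Rats_power2_Ints by (metis Ints_minus)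
  moreover have "W$1$k \<in> \<int>" "W$2$k \<in> \<int>" "W$3$k \<in> \<int>"
    using ints k by simp_all
  moreover have "W$4$k = d + W$1$k + W$2$k + W$3$k"
    by (simp add: d_def)
  ultimately show ?thesis
    by (simp add: Ints_add)
qed

lemma descartes_gram_row_Ints:
  assumes gram: "descartes_gram W"
    and ints: "\<And>j k. j \<noteq> i \<Longrightarrow> k \<noteq> 1 \<Longrightarrow> W$j$k \<in> \<int>" and k: "k \<noteq> 1"
  shows "W$i$k \<in> \<int>"
proof -
  define V where "V = (\<chi> j. W $ Transposition.transpose i 4 j)"
  have "descartes_gram V"
    unfolding V_def by (rule descartes_gram_permute_rows[OF gram bij_is_inj[OF bij_transpose]])
  moreover have "V$j$k \<in> \<int>" if "j \<noteq> 4" "k \<noteq> 1" for j k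
  proof -
    have "Transposition.transpose i 4 j \<noteq> i"
      using that(1) by (metis transpose_apply_second transpose_eq_imp_eq)
    then show ?thesis
      using ints that(2) by (simp add: V_def)
  qed
  ultimately have "V$4$k \<in> \<int>"
    using k by (rule descartes_gram_last_row_Ints)
  then show ?thesis
    by (simp add: V_def)
qed

section \<open>Disks, half-planes and tangency\<close>

lemma cnj_mult_self_unit: "cmod n = 1 \<Longrightarrow> cnj n * n = 1"
  using complex_norm_square[of n] by (simp add: mult.commute)

lemma dist_ge_if_balls_disjoint:
  fixes c1 c2 :: "'a::real_normed_vector"
  assumes "ball c1 r1 \<inter> ball c2 r2 = {}" "r1 > 0" "r2 > 0"
  shows "r1 + r2 \<le> dist c1 c2"
proof (rule ccontr)
  assume "\<not> ?thesis"
  then have close: "dist c1 c2 < r1 + r2"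
    by simp
  define t where "t = r1 / (r1 + r2)"
  define z where "z = c1 + t *\<^sub>R (c2 - c1)"
  have t: "0 < t" "t < 1" "t * (r1 + r2) = r1" "(1 - t) * (r1 + r2) = r2"
    using assms(2,3) by (auto simp: t_def field_simps)
  have "dist c1 z = t * dist c1 c2"
    using t by (simp add: z_def dist_norm norm_minus_commute)
  also have "\<dots> < t * (r1 + r2)"
    using close t by (intro mult_strict_left_mono) auto
  finally have "z \<in> ball c1 r1"
    using t by simp
  have "c2 - z = (1 - t) *\<^sub>R (c2 - c1)"
    by (simp add: z_def algebra_simps)
  then have "dist c2 z = (1 - t) * dist c1 c2"
    using t by (simp add: dist_norm norm_minus_commute)
  also have "\<dots> < (1 - t) * (r1 + r2)"
    using close t by (intro mult_strict_left_mono) auto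
  finally have "z \<in> ball c2 r2"
    using t by simp
  with \<open>z \<in> ball c1 r1\<close> assms(1) show False
    by blast
qed

lemma compl_cballs_meet:
  fixes c1 c2 :: "'a::{real_normed_vector, perfect_space}"
  shows "- cball c1 r1 \<inter> - cball c2 r2 \<noteq> {}"
proof
  assume "- cball c1 r1 \<inter> - cball c2 r2 = {}"
  then have "UNIV = cball c1 r1 \<union> cball c2 r2"
    by blast
  then show False
    by (metis bounded_Un bounded_cball not_bounded_UNIV)
qed

lemma compl_cball_halfplane_meet:
  assumes "cmod n = 1"
  shows "- cball c r \<inter> {z. Re (cnj n * z) > d} \<noteq> {}"
proof -
  define s where "s = \<bar>d\<bar> + cmod c + \<bar>r\<bar> + 1"
  define z where "z = n * of_real s"
  have "s > 0"
    unfolding s_def by (simp add: add_nonneg_pos)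
  have "Re (cnj n * z) = s"
    using cnj_mult_self_unit[OF assms] by (simp add: z_def mult.assoc[symmetric])
  then have in_halfplane: "Re (cnj n * z) > d"
    unfolding s_def using abs_ge_self[of d] norm_ge_zero[of c] abs_ge_zero[of r] by linarith
  have "cmod z = s"
    using assms \<open>s > 0\<close> by (simp add: z_def norm_mult)
  moreover have "cmod z - cmod c \<le> dist c z"
    using norm_triangle_ineq2[of z c] by (simp add: dist_norm norm_minus_commute)
  ultimately have "dist c z > r"
    unfolding s_def using abs_ge_self[of r] abs_ge_zero[of d] by linarith
  with in_halfplane have "z \<in> - cball c r \<inter> {z. Re (cnj n * z) > d}"
    by simp
  then show ?thesis
    by blast
qed

lemma halfplanes_same_normal_meet:
  assumes "cmod n = 1"
  shows "{z. Re (cnj n * z) > d1} \<inter> {z. Re (cnj n * z) > d2} \<noteq> {}"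
proof -
  define z where "z = n * of_real (max d1 d2 + 1)"
  have "Re (cnj n * z) = max d1 d2 + 1"
    using cnj_mult_self_unit[OF assms] by (simp add: z_def mult.assoc[symmetric])
  moreover have "d1 < max d1 d2 + 1" "d2 < max d1 d2 + 1"
    by auto
  ultimately have "z \<in> {z. Re (cnj n * z) > d1} \<inter> {z. Re (cnj n * z) > d2}"
    by simp
  then show ?thesis
    by blast
qed

lemma halfplane_le_if_disjoint_ball:
  assumes "cmod n = 1" "r > 0" "ball c r \<inter> {z. Re (cnj n * z) > d} = {}"
  shows "Re (cnj n * c) + r \<le> d"
proof (rule ccontr)
  assume "\<not> ?thesis"
  then have e: "d - Re (cnj n * c) < r"
    by simp
  define s where "s = (r + max (d - Re (cnj n * c)) 0) / 2"
  define z where "z = c + n * of_real s"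
  have s: "0 < s" "s < r" "d - Re (cnj n * c) < s"
    using e assms(2) by (auto simp: s_def)
  have "dist c z = s"
    using assms(1) s by (simp add: z_def dist_norm norm_mult)
  moreover have "Re (cnj n * z) = Re (cnj n * c) + s"
    using cnj_mult_self_unit[OF assms(1)] by (simp add: z_def distrib_left mult.assoc[symmetric])
  ultimately have "z \<in> ball c r \<inter> {z. Re (cnj n * z) > d}"
    using s by simp
  with assms(3) show False
    by blast
qed

lemma lines_meet_if_not_parallel:
  assumes "cmod n1 = 1" "Im (cnj n1 * n2) \<noteq> 0"
  obtains z where "Re (cnj n1 * z) = d1" "Re (cnj n2 * z) = d2"
proof
  define u where "u = cnj n1 * n2"
  define w where "w = Complex d1 ((d2 - d1 * Re u) / Im u)"
  have "cnj n1 * (n1 * w) = w"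
    using cnj_mult_self_unit[OF assms(1)] by (simp add: mult.assoc[symmetric])
  then show "Re (cnj n1 * (n1 * w)) = d1"
    by (simp only:) (simp add: w_def)
  have "cnj n2 * (n1 * w) = cnj u * w"
    by (simp add: u_def ac_simps)
  then show "Re (cnj n2 * (n1 * w)) = d2"
    using assms(2) unfolding u_def[symmetric] by (simp only:) (simp add: w_def field_simps)
qed

lemma tangent_sym: "tangent C D \<Longrightarrow> tangent D C"
  by (simp add: tangent_def Int_commute)

lemma Some_in_bdry_hat [simp]: "Some z \<in> bdry_hat C \<longleftrightarrow> z \<in> bdry C"
  by (auto simp: bdry_hat_def)

lemma None_in_bdry_hat [simp]: "None \<in> bdry_hat C \<longleftrightarrow> is_line C"
  by (auto simp: bdry_hat_def)

lemma tangent_common_point: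
  assumes "tangent C D" "\<not> is_line C"
  obtains z where "z \<in> bdry C" "z \<in> bdry D"
proof -
  obtain p where p: "p \<in> bdry_hat C" "p \<in> bdry_hat D"
    using assms(1) unfolding tangent_def by blast
  then obtain z where "p = Some z"
    using assms(2) by (cases p) auto
  with p that show ?thesis
    by simp
qed

lemma tangent_lines_disjoint:
  assumes "tangent C D" "is_line C" "is_line D"
  shows "bdry C \<inter> bdry D = {}"
proof -
  have "None \<in> bdry_hat C \<inter> bdry_hat D"
    using assms(2,3) by simp
  then have "Some z \<notin> bdry_hat C \<inter> bdry_hat D" for z
    using assms(1) unfolding tangent_def by (metis option.distinct(1))
  then show ?thesis
    by auto
qed

section \<open>Augmented curvature-center coordinates\<close>

text \<open>The curvature of the image under inversion in the unit circle (for a line, twice its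
  signed distance from the origin); the sign convention follows \<^const>\<open>curv\<close>.\<close>

fun co_curv :: "ocircle \<Rightarrow> real" where
  "co_curv (Disk c r) = ((cmod c)\<^sup>2 - r\<^sup>2) / r"
| "co_curv (CoDisk c r) = - (((cmod c)\<^sup>2 - r\<^sup>2) / r)"
| "co_curv (HPlane n d) = 2 * d"

definition aug_coords :: "ocircle \<Rightarrow> real^4" where
  "aug_coords C = (\<chi> l. if l = 1 then co_curv C else if l = 2 then curv C
                        else if l = 3 then Re (curv_center C) else Im (curv_center C))"

lemma aug_coords_nth [simp]:
  "aug_coords C $ 1 = co_curv C" "aug_coords C $ 2 = curv C"
  "aug_coords C $ 3 = Re (curv_center C)" "aug_coords C $ 4 = Im (curv_center C)"
  by (simp_all add: aug_coords_def)

lemma lorentz_ip_aug_coords: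
  "lorentz_ip (aug_coords C) (aug_coords D) = (co_curv C * curv D + curv C * co_curv D) / 2
     - Re (curv_center C) * Re (curv_center D) - Im (curv_center C) * Im (curv_center D)"
  by (simp add: lorentz_ip_def)

lemma lorentz_ip_Disk_Disk:
  assumes "r1 > 0" "r2 > 0"
  shows "lorentz_ip (aug_coords (Disk c1 r1)) (aug_coords (Disk c2 r2))
           = ((dist c1 c2)\<^sup>2 - r1\<^sup>2 - r2\<^sup>2) / (2 * r1 * r2)"
  using assms
  unfolding lorentz_ip_aug_coords co_curv.simps curv.simps curv_center.simps dist_norm cmod_power2
  by (simp add: field_simps power2_eq_square)

lemma aug_coords_CoDisk: "aug_coords (CoDisk c r) = (-1) *\<^sub>R aug_coords (Disk c r)"
  by (simp add: vec_eq_iff aug_coords_def)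

lemma lorentz_ip_Disk_CoDisk:
  assumes "r1 > 0" "r2 > 0"
  shows "lorentz_ip (aug_coords (Disk c1 r1)) (aug_coords (CoDisk c2 r2))
           = (r1\<^sup>2 + r2\<^sup>2 - (dist c1 c2)\<^sup>2) / (2 * r1 * r2)"
  using assms lorentz_ip_scaleR[of 1 _ "-1"] lorentz_ip_Disk_Disk[OF assms]
  by (simp add: aug_coords_CoDisk field_simps)

lemma lorentz_ip_Disk_HPlane:
  assumes "r > 0"
  shows "lorentz_ip (aug_coords (Disk c r)) (aug_coords (HPlane n d)) = (d - Re (cnj n * c)) / r"
  using assms unfolding lorentz_ip_aug_coords by (simp add: field_simps)

lemma lorentz_ip_HPlane_HPlane:
  "lorentz_ip (aug_coords (HPlane n1 d1)) (aug_coords (HPlane n2 d2)) = - Re (cnj n1 * n2)"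
  unfolding lorentz_ip_aug_coords by simp

lemma lorentz_ip_aug_coords_self:
  assumes "wf_circle C"
  shows "lorentz_ip (aug_coords C) (aug_coords C) = -1"
proof (cases C)
  case (Disk c r)
  then show ?thesis
    using assms lorentz_ip_Disk_Disk[of r r c c] by (simp add: power2_eq_square)
next
  case (CoDisk c r)
  then show ?thesis
    using assms lorentz_ip_Disk_Disk[of r r c c] lorentz_ip_scaleR[of "-1" _ "-1"]
    by (simp add: aug_coords_CoDisk power2_eq_square)
next
  case (HPlane n d)
  then show ?thesis
    using assms cnj_mult_self_unit[of n] by (simp add: lorentz_ip_HPlane_HPlane)
qed

lemma lorentz_ip_Disk_Disk_tangent:
  assumes "r1 > 0" "r2 > 0" "ball c1 r1 \<inter> ball c2 r2 = {}"
    and "z \<in> sphere c1 r1" "z \<in> sphere c2 r2"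
  shows "lorentz_ip (aug_coords (Disk c1 r1)) (aug_coords (Disk c2 r2)) = 1"
proof -
  have "dist c1 c2 \<le> r1 + r2"
    using dist_triangle[of c1 c2 z] assms(4,5) by (simp add: dist_commute)
  then have "dist c1 c2 = r1 + r2"
    using dist_ge_if_balls_disjoint[OF assms(3,1,2)] by simp
  then show ?thesis
    using assms(1,2) by (simp add: lorentz_ip_Disk_Disk field_simps power2_eq_square)
qed

lemma lorentz_ip_Disk_CoDisk_tangent:
  assumes "r1 > 0" "r2 > 0" "ball c1 r1 \<inter> - cball c2 r2 = {}"
    and "z \<in> sphere c1 r1" "z \<in> sphere c2 r2"
  shows "lorentz_ip (aug_coords (Disk c1 r1)) (aug_coords (CoDisk c2 r2)) = 1"
proof -
  have "ball c1 r1 \<subseteq> cball c2 r2"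
    using assms(3) by blast
  then have "dist c1 c2 + r1 \<le> r2"
    using assms(1) unfolding ball_subset_cball_iff by auto
  moreover have "r2 \<le> dist c1 c2 + r1"
    using dist_triangle[of c2 z c1] assms(4,5) by (simp add: dist_commute)
  ultimately have "dist c1 c2 = r2 - r1"
    by simp
  then have "r1\<^sup>2 + r2\<^sup>2 - (dist c1 c2)\<^sup>2 = 2 * r1 * r2"
    by (simp only:) (simp add: power2_eq_square algebra_simps)
  then show ?thesis
    using assms(1,2) by (simp add: lorentz_ip_Disk_CoDisk)
qed

lemma lorentz_ip_Disk_HPlane_tangent:
  assumes "r > 0" "cmod n = 1" "ball c r \<inter> {z. Re (cnj n * z) > d} = {}"
    and "z \<in> sphere c r" "Re (cnj n * z) = d"
  shows "lorentz_ip (aug_coords (Disk c r)) (aug_coords (HPlane n d)) = 1"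
proof -
  have "Re (cnj n * (z - c)) \<le> cmod (z - c)"
    using complex_Re_le_cmod[of "cnj n * (z - c)"] assms(2) by (simp add: norm_mult)
  also have "cmod (z - c) = r"
    using assms(4) by (simp add: dist_norm norm_minus_commute)
  finally have "d \<le> Re (cnj n * c) + r"
    using assms(5) by (simp add: algebra_simps)
  then have "d - Re (cnj n * c) = r"
    using halfplane_le_if_disjoint_ball[OF assms(2,1,3)] by simp
  then show ?thesis
    using assms(1) by (simp add: lorentz_ip_Disk_HPlane)
qed

lemma lorentz_ip_HPlane_HPlane_tangent:
  assumes n: "cmod n1 = 1" "cmod n2 = 1"
    and lines: "{z. Re (cnj n1 * z) = d1} \<inter> {z. Re (cnj n2 * z) = d2} = {}"
    and halfplanes: "{z. Re (cnj n1 * z) > d1} \<inter> {z. Re (cnj n2 * z) > d2} = {}"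
  shows "lorentz_ip (aug_coords (HPlane n1 d1)) (aug_coords (HPlane n2 d2)) = 1"
proof -
  define u where "u = cnj n1 * n2"
  have "Im u = 0"
    using lines_meet_if_not_parallel[OF n(1), of n2 d1 d2] lines unfolding u_def by blast
  moreover have "cmod u = 1"
    using n by (simp add: u_def norm_mult)
  ultimately have "Re u = 1 \<or> Re u = -1"
    using cmod_power2[of u] by (simp add: power2_eq_1_iff)
  moreover have "n2 = n1 * u"
    using cnj_mult_self_unit[OF n(1)] by (simp add: u_def ac_simps)
  then have "Re u \<noteq> 1"
    using \<open>Im u = 0\<close> halfplanes halfplanes_same_normal_meet[OF n(1)]
    by (auto simp: complex_eq_iff)
  ultimately show ?thesis
    by (simp add: lorentz_ip_HPlane_HPlane u_def)
qed

lemma lorentz_ip_Disk_tangent: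
  assumes "wf_circle (Disk c r)" "wf_circle D" "tangent (Disk c r) D"
    and "intr (Disk c r) \<inter> intr D = {}"
  shows "lorentz_ip (aug_coords (Disk c r)) (aug_coords D) = 1"
proof -
  obtain z where z: "z \<in> sphere c r" "z \<in> bdry D"
    using tangent_common_point[OF assms(3)] by auto
  show ?thesis
    using assms z
    by (cases D) (simp_all add: lorentz_ip_Disk_Disk_tangent lorentz_ip_Disk_CoDisk_tangent
        lorentz_ip_Disk_HPlane_tangent)
qed

lemma lorentz_ip_aug_coords_tangent:
  assumes "wf_circle C" "wf_circle D" "tangent C D" "intr C \<inter> intr D = {}"
  shows "lorentz_ip (aug_coords C) (aug_coords D) = 1"
proof (cases "\<exists>c r. C = Disk c r \<or> D = Disk c r")
  case True
  then show ?thesis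
    using assms lorentz_ip_Disk_tangent tangent_sym lorentz_ip_commute
    by (metis inf_commute)
next
  case False
  then consider (CoDisk_CoDisk) c1 r1 c2 r2 where "C = CoDisk c1 r1" "D = CoDisk c2 r2"
    | (CoDisk_HPlane) c r n d where "C = CoDisk c r" "D = HPlane n d"
    | (HPlane_CoDisk) c r n d where "C = HPlane n d" "D = CoDisk c r"
    | (HPlane_HPlane) n1 d1 n2 d2 where "C = HPlane n1 d1" "D = HPlane n2 d2"
    by (cases C; cases D) auto
  then show ?thesis
  proof cases
    case CoDisk_CoDisk
    then show ?thesis
      using assms(4) compl_cballs_meet[of c1 r1 c2 r2] by simp
  next
    case CoDisk_HPlane
    then show ?thesis
      using assms(2,4) compl_cball_halfplane_meet by auto
  next
    case HPlane_CoDisk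
    then show ?thesis
      using assms(1,4) compl_cball_halfplane_meet by (auto simp: inf_commute)
  next
    case HPlane_HPlane
    then show ?thesis
      using assms tangent_lines_disjoint[OF assms(3)]
      by (simp add: lorentz_ip_HPlane_HPlane_tangent)
  qed
qed

definition aug_matrix :: "(4 \<Rightarrow> ocircle) \<Rightarrow> bool \<Rightarrow> real^4^4" where
  "aug_matrix C pos = (\<chi> i. osign pos *\<^sub>R aug_coords (C i))"

lemma descartes_gram_aug_matrix:
  assumes "descartes C"
  shows "descartes_gram (aug_matrix C pos)"
  using assms
  unfolding descartes_gram_def aug_matrix_def descartes_def
  by (simp add: lorentz_ip_scaleR osign_def lorentz_ip_aug_coords_self lorentz_ip_aug_coords_tangent)

lemma int_row_cc_matrix_iff:
  "int_row (cc_matrix C pos $ i) \<longleftrightarrow>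
     ocurv C pos i \<in> \<int> \<and> Re (ocurv_center C pos i) \<in> \<int> \<and> Im (ocurv_center C pos i) \<in> \<int>"
  by (simp add: int_row_def forall_3 cc_matrix_def)

lemma int_row_cc_matrix_iff_aug_matrix:
  "int_row (cc_matrix C pos $ i) \<longleftrightarrow> (\<forall>k. k \<noteq> 1 \<longrightarrow> aug_matrix C pos $ i $ k \<in> \<int>)"
  by (simp add: int_row_cc_matrix_iff forall_4 aug_matrix_def ocurv_def ocurv_center_def)

theorem theorem9p1:
  fixes C :: "4 \<Rightarrow> ocircle" and pos :: bool
  assumes "descartes C"
  shows "(int_matrix (cc_matrix C pos) \<longleftrightarrow>
            (\<exists>i::4. \<forall>j. j \<noteq> i \<longrightarrow> int_row (cc_matrix C pos $ j)))
       \<and> (int_matrix (cc_matrix C pos) \<longleftrightarrow>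
            (\<exists>i::4. \<forall>j. j \<noteq> i \<longrightarrow>
               ocurv C pos j \<in> \<int> \<and> Re (ocurv_center C pos j) \<in> \<int>
               \<and> Im (ocurv_center C pos j) \<in> \<int>))"
proof -
  have "int_row (cc_matrix C pos $ i)" if "\<forall>j. j \<noteq> i \<longrightarrow> int_row (cc_matrix C pos $ j)" for i
    using that descartes_gram_row_Ints[OF descartes_gram_aug_matrix[OF assms]]
    unfolding int_row_cc_matrix_iff_aug_matrix by blast
  then have "int_matrix (cc_matrix C pos) \<longleftrightarrow>
      (\<exists>i::4. \<forall>j. j \<noteq> i \<longrightarrow> int_row (cc_matrix C pos $ j))"
    unfolding int_matrix_def by metis
  then show ?thesis
    unfolding int_row_cc_matrix_iff by simp
qed

end
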